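(* Let $p>p_0\geq 1$ be integers and let $f_n\in C[0,1]^p$. Define $\beta_0\in\mathbb{R}$ and $\boldsymbol{\beta}=(\beta_1,\ldots,\beta_p)'\in\mathbb{R}^p$ (the best linear approximation of $f_n$) by $$\beta_0+\boldsymbol{\beta}'\mathbf{x}=\mathop{\arg\min}_{g\in\{\phi_0+\boldsymbol{\phi}'\mathbf{x}:\ \phi_0\in\mathbb{R},\ \boldsymbol{\phi}\in\mathbb{R}^p\}}\int_{[0,1]^p}\left[f_n(\mathbf{x})-g(\mathbf{x})\right]^2d\mathbf{x}.$$ Suppose there exist $\widetilde{f}_n\in C[0,1]^{p_0}$ and $\eta_n>0$ such that $$\sup_{(x_1,\ldots,x_p)'\in[0,1]^p}\left|f_n(x_1,\ldots,x_p)-\widetilde{f}_n(x_1,\ldots,x_{p_0})\right|<\eta_n,$$ and a positive constant $\tau$ such that for each $j=1,\ldots,p_0$, $$\left|\int_{[0,1]^p}x_jf_n(\mathbf{x})d\mathbf{x}-\frac12\int_{[0,1]^p}f_n(\mathbf{x})d\mathbf{x}\right|>\tau.$$ Then $|\beta_j|<12\eta_n$ for $j=p_0+1,\ldots,p$, and $|\beta_j|>12\tau$ for $j=1,\ldots,p_0$.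
   Context: $\mathbf{x}=(x_1,\ldots,x_p)'$ and $C[0,1]^d$ denotes the continuous real functions on $[0,1]^d$. *)

theory Defs
  imports "HOL-Analysis.Analysis" "HOL-Probability.Probability"
begin

text \<open>Points of [0,1]^p are represented as extensional functions nat \<Rightarrow> real
  with coordinates indexed by 1..p (undefined outside).\<close>

definition unit_cube :: "nat \<Rightarrow> (nat \<Rightarrow> real) set" where
  "unit_cube p = PiE {1..p} (\<lambda>_. {0..1})"

definition cube_measure :: "nat \<Rightarrow> (nat \<Rightarrow> real) measure" where
  "cube_measure p = PiM {1..p} (\<lambda>_. restrict_space lborel {0..1})"

definition cube_integral :: "nat \<Rightarrow> ((nat \<Rightarrow> real) \<Rightarrow> real) \<Rightarrow> real" where
  "cube_integral p g = integral\<^sup>L (cube_measure p) g"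

definition best_linear_approx ::
  "nat \<Rightarrow> ((nat \<Rightarrow> real) \<Rightarrow> real) \<Rightarrow> real \<Rightarrow> (nat \<Rightarrow> real) \<Rightarrow> bool" where
  "best_linear_approx p f b0 b \<longleftrightarrow>
     (\<forall>phi0 phi.
        cube_integral p (\<lambda>x. (f x - (b0 + (\<Sum>j=1..p. b j * x j)))\<^sup>2)
        \<le> cube_integral p (\<lambda>x. (f x - (phi0 + (\<Sum>j=1..p. phi j * x j)))\<^sup>2))"

end

theory Submission
  imports Defs
begin

text \<open>Perturbing the optimal affine function in the direction \<open>x\<^sub>j - 1/2\<close> shows that the
  residual \<open>f - (\<beta>\<^sub>0 + \<beta>'x)\<close> is orthogonal to \<open>x\<^sub>j - 1/2\<close>. The centred coordinates are
  orthogonal to constants and to each other and have squared norm \<open>1/12\<close>, hence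
  \<open>\<beta>\<^sub>j = 12 \<integral> f(x) (x\<^sub>j - 1/2) dx\<close>, which for \<open>j \<le> p\<^sub>0\<close> is \<open>12 (\<integral> x\<^sub>j f - \<integral> f / 2)\<close>.
  For \<open>j > p\<^sub>0\<close> the function \<open>ft(x\<^sub>1, \<dots>, x\<^sub>p\<^sub>0)\<close> does not depend on \<open>x\<^sub>j\<close> and is therefore
  orthogonal to \<open>x\<^sub>j - 1/2\<close>, so \<open>\<integral> f(x) (x\<^sub>j - 1/2) dx = \<integral> (f - ft)(x) (x\<^sub>j - 1/2) dx\<close> is at
  most \<open>\<eta>/2\<close> in absolute value; in fact \<open>|\<beta>\<^sub>j| \<le> 6\<eta>\<close>.\<close>

abbreviation uniform01 :: "real measure" where
  "uniform01 \<equiv> restrict_space lborel {0..1}"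

lemma prob_space_uniform01: "prob_space uniform01"
  by (intro prob_spaceI) (simp add: emeasure_restrict_space space_restrict_space)

lemma integral_uniform01_FTC:
  assumes "\<And>y. (F has_real_derivative q y) (at y)" and "continuous_on {0..1} q"
  shows "(\<integral>y. q y \<partial>uniform01) = F 1 - F 0"
proof -
  have "(\<integral>y. q y \<partial>uniform01) = integral\<^sup>L lborel (\<lambda>y. indicator {0..1::real} y *\<^sub>R q y)"
    by (rule integral_restrict_space) simp
  also have "\<dots> = F 1 - F 0"
    by (rule integral_FTC_atLeastAtMost)
       (use assms in \<open>auto simp: has_real_derivative_iff_has_vector_derivative[symmetric]
                        intro: has_field_derivative_at_within\<close>)
  finally show ?thesis .
qed

lemma integral_uniform01_centered: "(\<integral>y. y - 1/2 \<partial>uniform01) = 0"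
proof -
  have "(\<integral>y. y - 1/2 \<partial>uniform01) = (\<lambda>y::real. y\<^sup>2/2 - y/2) 1 - (\<lambda>y. y\<^sup>2/2 - y/2) 0"
    by (rule integral_uniform01_FTC) (auto intro!: derivative_eq_intros continuous_intros)
  then show ?thesis by simp
qed

lemma integral_uniform01_mult_centered: "(\<integral>y. y * (y - 1/2) \<partial>uniform01) = 1/12"
proof -
  have "(\<integral>y. y * (y - 1/2) \<partial>uniform01) = (\<lambda>y::real. y^3/3 - y\<^sup>2/4) 1 - (\<lambda>y. y^3/3 - y\<^sup>2/4) 0"
    by (rule integral_uniform01_FTC)
       (auto intro!: derivative_eq_intros continuous_intros simp: power2_eq_square algebra_simps)
  then show ?thesis by simp
qed

lemma prob_space_cube_measure: "prob_space (cube_measure n)"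
  unfolding cube_measure_def by (intro prob_space_PiM prob_space_uniform01)

lemma space_cube_measure: "space (cube_measure n) = unit_cube n"
  unfolding cube_measure_def unit_cube_def by (simp add: space_PiM space_restrict_space)

lemma unit_cube_coordinate:
  assumes "x \<in> unit_cube n" and "j \<in> {1..n}"
  shows "0 \<le> x j" and "x j \<le> 1"
  using assms by (auto simp: unit_cube_def PiE_iff)

lemma compact_unit_cube: "compact (unit_cube n)"
proof -
  have "unit_cube n = PiE UNIV (\<lambda>i. if i \<in> {1..n} then {0..1} else {undefined})"
    unfolding unit_cube_def by (auto simp: PiE_iff extensional_def split: if_splits)
  then have "compactin (product_topology (\<lambda>_. euclidean) UNIV) (unit_cube n)"
    by (simp add: compactin_PiE)
  then show ?thesis by (simp add: euclidean_product_topology)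
qed

lemma continuous_on_coordinate [continuous_intros]: "continuous_on S (\<lambda>x::_ \<Rightarrow> real. x i)"
  by (rule continuous_on_subset[OF continuous_on_product_coordinates]) simp

lemma continuous_on_restrict_coordinates [continuous_intros]:
  "continuous_on S (\<lambda>x::_ \<Rightarrow> real. restrict x A)"
proof (rule continuous_on_coordinatewise_then_product)
  fix i
  show "continuous_on S (\<lambda>x. restrict x A i)"
    by (cases "i \<in> A") (simp_all add: restrict_def continuous_on_coordinate)
qed

lemma continuous_on_unit_cube_restrict:
  assumes "m \<le> n" and "continuous_on (unit_cube m) g"
  shows "continuous_on (unit_cube n) (\<lambda>x. g (restrict x {1..m}))"
  using assms
  by (intro continuous_on_compose2[OF assms(2) continuous_on_restrict_coordinates])
     (auto simp: unit_cube_def PiE_iff)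

lemma le_cSUP_compact:
  fixes g :: "'a::topological_space \<Rightarrow> real"
  assumes "compact S" and "continuous_on S g" and "x \<in> S"
  shows "g x \<le> (SUP y\<in>S. g y)"
proof (rule cSUP_upper[OF assms(3)])
  show "bdd_above (g ` S)"
    by (intro bounded_imp_bdd_above compact_imp_bounded compact_continuous_image assms(1,2))
qed

lemma borel_measurable_coordinate: "(\<lambda>x. x i) \<in> borel_measurable (cube_measure n)"
proof (cases "i \<in> {1..n}")
  case True
  have "(\<lambda>x. x i) \<in> measurable (cube_measure n) uniform01"
    unfolding cube_measure_def using True by (rule measurable_component_singleton)
  moreover have "(\<lambda>y. y) \<in> measurable uniform01 borel"
    by (rule measurable_restrict_space1) simp
  ultimately show ?thesis by (rule measurable_compose)
next
  case False
  then have undef: "x i = undefined" if "x \<in> space (cube_measure n)" for x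
    using that by (simp add: space_cube_measure unit_cube_def PiE_def extensional_def)
  show ?thesis
    by (subst measurable_cong[OF undef]) simp_all
qed

lemma measurable_cube_measure_borel:
  "(\<lambda>x. x) \<in> measurable (cube_measure n) (borel :: (nat \<Rightarrow> real) measure)"
proof -
  have "(\<lambda>x i. x i) \<in> measurable (cube_measure n) (Pi\<^sub>M UNIV (\<lambda>_. borel :: real measure))"
    by (rule measurable_PiM_single') (simp_all add: borel_measurable_coordinate)
  then show ?thesis
    using measurable_cong_sets[OF refl sets_PiM_equal_borel] by blast
qed

lemma integrable_continuous_on_cube:
  fixes g :: "(nat \<Rightarrow> real) \<Rightarrow> real"
  assumes g: "continuous_on (unit_cube n) g"
  shows "integrable (cube_measure n) g"
proof -
  interpret prob_space "cube_measure n" by (rule prob_space_cube_measure)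
  have "(\<lambda>x. x) \<in> measurable (cube_measure n) (restrict_space borel (unit_cube n))"
    by (rule measurable_restrict_space2) (simp_all add: space_cube_measure measurable_cube_measure_borel)
  moreover have "g \<in> borel_measurable (restrict_space borel (unit_cube n))"
    using g by (rule borel_measurable_continuous_on_restrict)
  ultimately have meas: "g \<in> borel_measurable (cube_measure n)"
    by (rule measurable_compose)
  have "bounded (g ` unit_cube n)"
    by (rule compact_imp_bounded[OF compact_continuous_image[OF g compact_unit_cube]])
  then obtain B where "\<forall>x\<in>unit_cube n. norm (g x) \<le> B"
    by (auto simp: bounded_iff)
  then show ?thesis
    by (intro integrable_const_bound[of _ B] AE_I2 meas) (simp add: space_cube_measure)
qed

lemma cube_integral_split_coordinate:
  assumes j: "j \<in> {1..n}" and F: "integrable (cube_measure n) F"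
  shows "cube_integral n F
    = (\<integral>x. (\<integral>y. F (x(j := y)) \<partial>uniform01) \<partial>Pi\<^sub>M ({1..n} - {j}) (\<lambda>_. uniform01))"
proof -
  interpret product_sigma_finite "\<lambda>_::nat. uniform01"
    unfolding product_sigma_finite_def
    using prob_space_imp_sigma_finite[OF prob_space_uniform01] by simp
  have "{1..n} = insert j ({1..n} - {j})" using j by auto
  then show ?thesis
    using product_integral_insert[of "{1..n} - {j}" j F] F
    unfolding cube_integral_def cube_measure_def by simp
qed

lemma cube_integral_coordinate:
  assumes j: "j \<in> {1..n}" and q: "integrable (cube_measure n) (\<lambda>x. q (x j))"
  shows "cube_integral n (\<lambda>x. q (x j)) = (\<integral>y. q y \<partial>uniform01)"
proof -
  have "prob_space (Pi\<^sub>M ({1..n} - {j}) (\<lambda>_. uniform01))"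
    by (intro prob_space_PiM prob_space_uniform01)
  then show ?thesis
    unfolding cube_integral_split_coordinate[OF j q] by (simp add: prob_space.prob_space)
qed

lemma cube_integral_centered_coordinate_orthogonal:
  assumes j: "j \<in> {1..n}" and h: "\<And>x y. h (x(j := y)) = h x"
    and int: "integrable (cube_measure n) (\<lambda>x. h x * (x j - 1/2))"
  shows "cube_integral n (\<lambda>x. h x * (x j - 1/2)) = 0"
  unfolding cube_integral_split_coordinate[OF j int] by (simp add: h integral_uniform01_centered)

lemma cube_integral_coordinate_mult_centered:
  assumes "j \<in> {1..n}" and "k \<in> {1..n}"
  shows "cube_integral n (\<lambda>x. x k * (x j - 1/2)) = (if k = j then 1/12 else 0)"
proof (cases "k = j")
  case True
  then show ?thesis
    using cube_integral_coordinate[OF assms(1), of "\<lambda>y. y * (y - 1/2)"]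
    by (simp add: integrable_continuous_on_cube continuous_intros integral_uniform01_mult_centered)
next
  case False
  then show ?thesis
    using cube_integral_centered_coordinate_orthogonal[OF assms(1), of "\<lambda>x. x k"]
    by (simp add: integrable_continuous_on_cube continuous_intros)
qed

lemma cube_integral_affine_mult_centered:
  assumes j: "j \<in> {1..n}"
  shows "cube_integral n (\<lambda>x. (c + (\<Sum>k=1..n. b k * x k)) * (x j - 1/2)) = b j / 12"
proof -
  have int: "integrable (cube_measure n) (\<lambda>x. x k * (x j - 1/2))" for k
    by (intro integrable_continuous_on_cube continuous_intros)
  have "cube_integral n (\<lambda>x. (c + (\<Sum>k=1..n. b k * x k)) * (x j - 1/2))
      = cube_integral n (\<lambda>x. c * (x j - 1/2) + (\<Sum>k=1..n. b k * (x k * (x j - 1/2))))"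
    by (simp add: distrib_right sum_distrib_right mult.assoc)
  also have "\<dots> = c * cube_integral n (\<lambda>x. x j - 1/2)
      + (\<Sum>k=1..n. b k * cube_integral n (\<lambda>x. x k * (x j - 1/2)))"
    using int integrable_continuous_on_cube[of n "\<lambda>x. x j - 1/2"]
    by (simp add: cube_integral_def integral_sum continuous_intros)
  also have "\<dots> = (\<Sum>k=1..n. b k * (if k = j then 1/12 else 0))"
    using j cube_integral_centered_coordinate_orthogonal[OF j, of "\<lambda>_. 1"]
    by (simp add: integrable_continuous_on_cube continuous_intros cube_integral_coordinate_mult_centered)
  also have "\<dots> = b j / 12"
    using j by (simp add: if_distrib cong: if_cong)
  finally show ?thesis .
qed

lemma cube_integral_mult_centered_coordinate:
  assumes "continuous_on (unit_cube n) f"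
  shows "cube_integral n (\<lambda>x. f x * (x j - 1/2)) = cube_integral n (\<lambda>x. x j * f x) - cube_integral n f / 2"
  using assms
  by (simp add: cube_integral_def right_diff_distrib mult.commute integrable_continuous_on_cube
      continuous_intros)

lemma quadratic_nonneg_imp_linear_coeff_zero:
  fixes a c :: real
  assumes "\<And>t. 0 \<le> c * t\<^sup>2 - 2 * a * t"
  shows "a = 0"
proof (cases "c > 0")
  case True
  have "0 \<le> c * (a / c)\<^sup>2 - 2 * a * (a / c)" by (rule assms)
  also have "\<dots> = - a\<^sup>2 / c" using True by (simp add: power2_eq_square field_simps)
  finally have "a\<^sup>2 / c \<le> 0" by simp
  with True have "a\<^sup>2 \<le> 0" by (simp add: divide_le_0_iff)
  then show ?thesis by simp
next
  case False
  have "0 \<le> c * a\<^sup>2 - 2 * a\<^sup>2" using assms[of a] by (simp add: power2_eq_square)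
  moreover have "c * a\<^sup>2 \<le> 0" using False by (simp add: mult_nonpos_nonneg)
  ultimately have "a\<^sup>2 \<le> 0" by linarith
  then show ?thesis by simp
qed

lemma integral_residual_orthogonal_if_minimal:
  fixes r u :: "'a \<Rightarrow> real"
  assumes "integrable M (\<lambda>x. (r x)\<^sup>2)" "integrable M (\<lambda>x. r x * u x)" "integrable M (\<lambda>x. (u x)\<^sup>2)"
    and min: "\<And>t. (\<integral>x. (r x)\<^sup>2 \<partial>M) \<le> (\<integral>x. (r x - t * u x)\<^sup>2 \<partial>M)"
  shows "(\<integral>x. r x * u x \<partial>M) = 0"
proof (rule quadratic_nonneg_imp_linear_coeff_zero)
  fix t
  have "(\<integral>x. (r x - t * u x)\<^sup>2 \<partial>M)
      = (\<integral>x. (r x)\<^sup>2 - 2 * t * (r x * u x) + t\<^sup>2 * (u x)\<^sup>2 \<partial>M)"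
    by (simp add: power2_eq_square algebra_simps)
  also have "\<dots> = (\<integral>x. (r x)\<^sup>2 \<partial>M) - 2 * t * (\<integral>x. r x * u x \<partial>M) + t\<^sup>2 * (\<integral>x. (u x)\<^sup>2 \<partial>M)"
    using assms(1-3) by simp
  finally show "0 \<le> (\<integral>x. (u x)\<^sup>2 \<partial>M) * t\<^sup>2 - 2 * (\<integral>x. r x * u x \<partial>M) * t"
    using min[of t] by (simp add: algebra_simps)
qed

lemma best_linear_approx_coeff:
  assumes f: "continuous_on (unit_cube p) f" and best: "best_linear_approx p f b0 b"
    and j: "j \<in> {1..p}"
  shows "b j = 12 * cube_integral p (\<lambda>x. f x * (x j - 1/2))"
proof -
  define g where "g x = b0 + (\<Sum>k=1..p. b k * x k)" for x :: "nat \<Rightarrow> real"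
  have g: "continuous_on (unit_cube p) g"
    unfolding g_def by (intro continuous_intros)
  have perturb: "(b0 - t/2) + (\<Sum>k=1..p. (b(j := b j + t)) k * x k) = g x + t * (x j - 1/2)"
    for t x
  proof -
    have "(\<Sum>k=1..p. (b(j := b j + t)) k * x k) = (\<Sum>k=1..p. b k * x k + (if k = j then t * x k else 0))"
      by (rule sum.cong) (auto simp: algebra_simps)
    then show ?thesis
      using j by (simp add: g_def sum.distrib algebra_simps)
  qed
  have "cube_integral p (\<lambda>x. (f x - g x) * (x j - 1/2)) = 0"
    unfolding cube_integral_def
  proof (rule integral_residual_orthogonal_if_minimal)
    fix t
    show "(\<integral>x. (f x - g x)\<^sup>2 \<partial>cube_measure p) \<le> (\<integral>x. (f x - g x - t * (x j - 1/2))\<^sup>2 \<partial>cube_measure p)"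
        using best[unfolded best_linear_approx_def, rule_format, of "b0 - t/2" "b(j := b j + t)"]
      unfolding perturb cube_integral_def g_def by (simp add: diff_diff_eq)
  qed (use f g in \<open>auto intro!: integrable_continuous_on_cube continuous_intros\<close>)
  moreover have "cube_integral p (\<lambda>x. g x * (x j - 1/2)) = b j / 12"
    unfolding g_def by (rule cube_integral_affine_mult_centered[OF j])
  moreover have "cube_integral p (\<lambda>x. (f x - g x) * (x j - 1/2))
      = cube_integral p (\<lambda>x. f x * (x j - 1/2)) - cube_integral p (\<lambda>x. g x * (x j - 1/2))"
    using f g by (simp add: cube_integral_def left_diff_distrib integrable_continuous_on_cube continuous_intros)
  ultimately show ?thesis by simp
qed

lemma abs_cube_integral_centered_le:
  assumes j: "j \<in> {1..n}"
    and f: "continuous_on (unit_cube n) f" and h: "continuous_on (unit_cube n) h"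
    and h_indep: "\<And>x y. h (x(j := y)) = h x"
    and close: "\<And>x. x \<in> unit_cube n \<Longrightarrow> \<bar>f x - h x\<bar> \<le> S"
  shows "\<bar>cube_integral n (\<lambda>x. f x * (x j - 1/2))\<bar> \<le> S / 2"
proof -
  interpret prob_space "cube_measure n" by (rule prob_space_cube_measure)
  have int: "integrable (cube_measure n) (\<lambda>x. g x * (x j - 1/2))"
    if "continuous_on (unit_cube n) g" for g
    by (intro integrable_continuous_on_cube continuous_intros that)
  have "cube_integral n (\<lambda>x. f x * (x j - 1/2))
      = cube_integral n (\<lambda>x. (f x - h x) * (x j - 1/2)) + cube_integral n (\<lambda>x. h x * (x j - 1/2))"
    using int[OF f] int[OF h]
    by (simp add: cube_integral_def left_diff_distrib integrable_continuous_on_cube continuous_intros f h)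
  also have "cube_integral n (\<lambda>x. h x * (x j - 1/2)) = 0"
    by (rule cube_integral_centered_coordinate_orthogonal[OF j h_indep int[OF h]])
  finally have "\<bar>cube_integral n (\<lambda>x. f x * (x j - 1/2))\<bar>
      = \<bar>\<integral>x. (f x - h x) * (x j - 1/2) \<partial>cube_measure n\<bar>"
    by (simp add: cube_integral_def)
  also have "\<dots> \<le> (\<integral>x. \<bar>(f x - h x) * (x j - 1/2)\<bar> \<partial>cube_measure n)"
    by (rule integral_abs_bound)
  also have "\<dots> \<le> (\<integral>x. S / 2 \<partial>cube_measure n)"
  proof (rule integral_mono)
    fix x assume "x \<in> space (cube_measure n)"
    then have x: "x \<in> unit_cube n" by (simp add: space_cube_measure)
    have "\<bar>x j - 1/2\<bar> \<le> 1/2" using unit_cube_coordinate[OF x j] by linarith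
    then have "\<bar>f x - h x\<bar> * \<bar>x j - 1/2\<bar> \<le> S * (1/2)"
      using close[OF x] by (intro mult_mono) auto
    then show "\<bar>(f x - h x) * (x j - 1/2)\<bar> \<le> S / 2" by (simp add: abs_mult)
  qed (use f h in \<open>auto intro!: integrable_continuous_on_cube continuous_intros\<close>)
  also have "\<dots> = S / 2" by (simp add: prob_space)
  finally show ?thesis .
qed

theorem theorem1:
  fixes p p0 :: nat
    and f ft :: "(nat \<Rightarrow> real) \<Rightarrow> real"
    and b0 eta tau :: real and b :: "nat \<Rightarrow> real"
  assumes "1 \<le> p0" and "p0 < p"
    and "continuous_on (unit_cube p) f"
    and "continuous_on (unit_cube p0) ft"
    and "best_linear_approx p f b0 b"
    and "eta > 0"
    and "(SUP x\<in>unit_cube p. \<bar>f x - ft (restrict x {1..p0})\<bar>) < eta"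
    and "tau > 0"
    and "\<forall>j\<in>{1..p0}. \<bar>cube_integral p (\<lambda>x. x j * f x) - cube_integral p f / 2\<bar> > tau"
  shows "(\<forall>j\<in>{p0+1..p}. \<bar>b j\<bar> < 12 * eta) \<and> (\<forall>j\<in>{1..p0}. \<bar>b j\<bar> > 12 * tau)"
proof -
  let ?ft = "\<lambda>x. ft (restrict x {1..p0})"
  have ft: "continuous_on (unit_cube p) ?ft"
    using assms(2,4) by (intro continuous_on_unit_cube_restrict) simp_all
  have close: "\<bar>f x - ?ft x\<bar> \<le> (SUP x\<in>unit_cube p. \<bar>f x - ?ft x\<bar>)" if "x \<in> unit_cube p" for x
    using assms(3) ft that by (intro le_cSUP_compact compact_unit_cube continuous_intros)
  have "\<bar>b j\<bar> < 12 * eta" if j: "j \<in> {p0+1..p}" for j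
  proof -
    have "?ft (x(j := y)) = ?ft x" for x y
      using j by (intro arg_cong[where f = ft]) (auto simp: restrict_def)
    then have "\<bar>cube_integral p (\<lambda>x. f x * (x j - 1/2))\<bar> \<le> (SUP x\<in>unit_cube p. \<bar>f x - ?ft x\<bar>) / 2"
      using j assms(1) by (intro abs_cube_integral_centered_le[OF _ assms(3) ft _ close]) auto
    then show ?thesis
      using best_linear_approx_coeff[OF assms(3,5), of j] j assms(1,6,7) by (auto simp: abs_mult)
  qed
  moreover have "\<bar>b j\<bar> > 12 * tau" if j: "j \<in> {1..p0}" for j
  proof -
    have "b j = 12 * (cube_integral p (\<lambda>x. x j * f x) - cube_integral p f / 2)"
      using best_linear_approx_coeff[OF assms(3,5), of j] j assms(2)
      by (simp add: cube_integral_mult_centered_coordinate[OF assms(3)])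
    then show ?thesis
      using j assms(9) by (simp only: abs_mult) auto
  qed
  ultimately show ?thesis by blast
qed

end
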